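(* Let $A$ be a $\mathbb{Z}$-module and let $S'\subset S\subset\mathbb{N}$. Suppose that for each $n\in S$ there is a finite sequence $n'=n_0\Leftrightarrow_A n_1\Leftrightarrow_A\cdots\Leftrightarrow_A n_r=n$ ($r\ge0$) of elements of $S$ with $n'\in S'$. Then the homomorphism $\rho^A_{S,S'}\colon A[q]^S\to A[q]^{S'}$ induced by the identity of $A[q]$ is injective.
   Context: $q$ is an indeterminate; $A[q]$ is the $\mathbb{Z}[q]$-module of polynomials in $q$ with coefficients in $A$. For $n\in\mathbb{N}$, $\Phi_n(q)$ is the $n$th cyclotomic polynomial; for $S\subset\mathbb{N}$, $\Phi_S^*$ is the multiplicative subset of $\mathbb{Z}[q]$ generated by $\{\Phi_m(q):m\in S\}$, directed by divisibility, and $A[q]^S=\varprojlim_{f\in\Phi_S^*}A[q]/fA[q]$. $A$ is $p$-adically separated if $\bigcap_{j\ge0}p^jA=0$. For $m,n\in\mathbb{N}$ write $m\Leftrightarrow_A n$ if $m=n$, or $A=0$, or $m/n$ is an integer power (positive or negative exponent) of a prime $p$ such that $A$ is $p$-adically separated. *)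

theory Defs
  imports Complex_Main "HOL-Computational_Algebra.Polynomial" "HOL-Library.Multiset"
begin

definition zmult :: "int \<Rightarrow> 'a::ab_group_add \<Rightarrow> 'a" where
  "zmult k x = (if 0 \<le> k then (\<Sum>i<nat k. x) else - (\<Sum>i<nat (- k). x))"

text \<open>The Z[q]-module structure of A[q]: action of f in Z[q] on p in A[q].\<close>
definition zpoly_act :: "int poly \<Rightarrow> 'a::ab_group_add poly \<Rightarrow> 'a poly" where
  "zpoly_act f p = (\<Sum>i\<le>degree f. (pCons 0 ^^ i) (map_poly (zmult (coeff f i)) p))"

definition cyclotomic :: "nat \<Rightarrow> int poly" where
  "cyclotomic n = (THE p. map_poly of_int p =
     (\<Prod>k\<in>{k\<in>{1..n}. coprime k n}. [:- cis (2 * pi * real k / real n), 1:]))"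

definition cyc_mon :: "nat set \<Rightarrow> int poly set" where
  "cyc_mon S = {prod_mset (image_mset cyclotomic M) | M. set_mset M \<subseteq> S}"

definition zsub :: "int poly \<Rightarrow> 'a::ab_group_add poly set" where
  "zsub f = range (zpoly_act f)"

definition zcoset :: "int poly \<Rightarrow> 'a::ab_group_add poly \<Rightarrow> 'a poly set" where
  "zcoset f p = {p + h | h. h \<in> zsub f}"

text \<open>A[q]^S = inverse limit of A[q]/fA[q], f in Phi_S^*, directed by divisibility,
  as the set of compatible families (extensional outside Phi_S^*).\<close>
definition completion :: "nat set \<Rightarrow> (int poly \<Rightarrow> 'a::ab_group_add poly set) set" where
  "completion S = {x.
     (\<forall>f\<in>cyc_mon S. \<exists>p. x f = zcoset f p) \<and>
     (\<forall>f\<in>cyc_mon S. \<forall>g\<in>cyc_mon S. f dvd g \<longrightarrow>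
        (\<forall>p. x g = zcoset g p \<longrightarrow> x f = zcoset f p)) \<and>
     (\<forall>f. f \<notin> cyc_mon S \<longrightarrow> x f = undefined)}"

definition rho :: "nat set \<Rightarrow> (int poly \<Rightarrow> 'a::ab_group_add poly set) \<Rightarrow> (int poly \<Rightarrow> 'a poly set)" where
  "rho S' x = (\<lambda>f. if f \<in> cyc_mon S' then x f else undefined)"

definition padic_separated :: "'a::ab_group_add itself \<Rightarrow> nat \<Rightarrow> bool" where
  "padic_separated TYPE('a) p \<longleftrightarrow>
     (\<Inter>j. range (zmult (int p ^ j) :: 'a \<Rightarrow> 'a)) = {0}"

definition equiv_A :: "'a::ab_group_add itself \<Rightarrow> nat \<Rightarrow> nat \<Rightarrow> bool" where
  "equiv_A T m n \<longleftrightarrow> m = n \<or> (UNIV :: 'a set) = {0} \<or>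
     (\<exists>p k. prime p \<and> (m = n * p ^ k \<or> n = m * p ^ k) \<and> padic_separated T p)"

end

theory Submission
  imports
    Defs
    "HOL-Computational_Algebra.Fundamental_Theorem_Algebra"
    "HOL-Computational_Algebra.Polynomial_Factorial"
begin

text \<open>
  Let x, y be compatible families with the same image in A[q]^S', so they agree at all moduli
  in \<Phi>_U^* for U = S'; the chains let us enlarge U one index at a time until it exhausts S.
  Let n \<in> U and m = n p^(\<plusminus>k) with A p-adically separated. Since \<Phi>_N(q^p) equals \<Phi>_Np,
  times \<Phi>_N when p does not divide N, the Frobenius congruence f(q)^p = f(q^p) mod p makes
  \<Phi>_n nilpotent modulo (p, \<Phi>_m): for all a, j some power \<Phi>_n^b lies in
  \<Phi>_m^a \<int>[q] + p^j \<int>[q]. Hence for f = g \<Phi>_m^a with g \<in> \<Phi>_U^* the components of x and y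
  at f differ by an element of f A[q] + p^j A[q] for every j. As f is monic, division with
  remainder and separatedness put the difference in f A[q].
\<close>

section \<open>Cyclotomic polynomials\<close>

lemma root_of_unity_order_exists:
  fixes z :: "'a::monoid_mult"
  assumes "z ^ m = 1" "m > 0"
  obtains e where "e > 0" "\<And>d. z ^ d = 1 \<longleftrightarrow> e dvd d"
proof -
  define e where "e = (LEAST e. e > 0 \<and> z ^ e = 1)"
  have e: "e > 0" "z ^ e = 1"
    using LeastI[of "\<lambda>e. e > 0 \<and> z ^ e = 1" m] assms e_def by auto
  have minimal: "z ^ k \<noteq> 1" if "0 < k" "k < e" for k
    using not_less_Least that e_def by blast
  have "z ^ d = 1 \<longleftrightarrow> e dvd d" for d
  proof
    assume "z ^ d = 1"
    moreover have "z ^ d = (z ^ e) ^ (d div e) * z ^ (d mod e)"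
      by (metis div_mult_mod_eq power_add power_mult mult.commute)
    ultimately have "z ^ (d mod e) = 1"
      using e by simp
    then show "e dvd d"
      using minimal[of "d mod e"] e by (cases "d mod e = 0") auto
  qed (use e in \<open>auto simp: power_mult\<close>)
  with e that show thesis
    by blast
qed

definition prim_roots :: "nat \<Rightarrow> complex set" where
  "prim_roots n = {z. \<forall>d. z ^ d = 1 \<longleftrightarrow> n dvd d}"

definition complex_cyclotomic :: "nat \<Rightarrow> complex poly" where
  "complex_cyclotomic n = (\<Prod>z\<in>prim_roots n. [:-z, 1:])"

lemma prim_roots_power_eq_1: "z \<in> prim_roots n \<Longrightarrow> z ^ n = 1"
  by (auto simp: prim_roots_def)

lemma prim_roots_unique: "z \<in> prim_roots n \<Longrightarrow> z \<in> prim_roots m \<Longrightarrow> n = m"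
  unfolding prim_roots_def by (metis (mono_tags) dvd_antisym dvd_refl mem_Collect_eq)

lemma finite_prim_roots: "n > 0 \<Longrightarrow> finite (prim_roots n)"
  by (rule finite_subset[of _ "{z. z ^ n = 1}"]) (auto simp: prim_roots_power_eq_1)

lemma roots_of_unity_eq_UN_prim_roots:
  assumes "n > 0"
  shows "{z::complex. z ^ n = 1} = (\<Union>d\<in>{d. d dvd n}. prim_roots d)"
proof safe
  fix z :: complex
  assume "z ^ n = 1"
  then obtain e where "\<And>d. z ^ d = 1 \<longleftrightarrow> e dvd d"
    using root_of_unity_order_exists assms by metis
  with \<open>z ^ n = 1\<close> show "z \<in> (\<Union>d\<in>{d. d dvd n}. prim_roots d)"
    by (auto simp: prim_roots_def)
qed (auto simp: prim_roots_def)

lemma mset_set_set_mset_if_size_eq_card: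
  assumes "size M = card (set_mset M)"
  shows "M = mset_set (set_mset M)"
proof -
  have sub: "mset_set (set_mset M) \<subseteq># M"
    by (rule mset_set_set_mset_msubset)
  with assms have "size (M - mset_set (set_mset M)) = 0"
    by (simp add: size_Diff_submset)
  with sub show ?thesis
    by (metis size_eq_0_iff_empty subset_mset.diff_add add_0)
qed

lemma monom_minus_const_eq_prod_roots:
  assumes "n > 0" "c \<noteq> 0"
  shows "monom 1 n - [:c:] = (\<Prod>z\<in>{z::complex. z ^ n = c}. [:-z, 1:])"
proof -
  define P where "P = (monom 1 n - [:c:] :: complex poly)"
  have "P = monom 1 n + [:-c:]"
    by (simp add: P_def)
  then have deg: "degree P = n"
    using assms by (simp add: degree_add_eq_left degree_monom_eq)
  have "coeff [:c:] n = 0"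
    using assms by (cases n) auto
  with deg have lead: "lead_coeff P = 1"
    by (simp add: P_def)
  then have "P \<noteq> 0"
    by auto
  have roots: "{x. poly P x = 0} = {z. z ^ n = c}"
    by (auto simp: P_def poly_monom)
  have "size (proots P) = card (set_mset (proots P))"
    using size_proots_complex card_nth_roots[OF assms(2,1)] deg roots \<open>P \<noteq> 0\<close> by simp
  then have "proots P = mset_set {z. z ^ n = c}"
    using mset_set_set_mset_if_size_eq_card \<open>P \<noteq> 0\<close> roots by (metis set_count_proots)
  then have "P = (\<Prod>z\<in>{z::complex. z ^ n = c}. [:-z, 1:])"
    using complex_poly_decompose_multiset[of P] lead by (simp add: prod_unfold_prod_mset)
  then show ?thesis
    by (simp add: P_def)
qed

lemma monom_minus_one_eq_prod_complex_cyclotomic: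
  assumes "n > 0"
  shows "monom 1 n - 1 = (\<Prod>d\<in>{d. d dvd n}. complex_cyclotomic d)"
proof -
  have "monom 1 n - 1 = (\<Prod>z\<in>{z::complex. z ^ n = 1}. [:-z, 1:])"
    using monom_minus_const_eq_prod_roots[OF assms, of 1] by (simp add: one_pCons)
  also have "\<dots> = (\<Prod>z\<in>(\<Union>d\<in>{d. d dvd n}. prim_roots d). [:-z, 1:])"
    using roots_of_unity_eq_UN_prim_roots[OF assms] by simp
  also have "\<dots> = (\<Prod>d\<in>{d. d dvd n}. complex_cyclotomic d)"
    unfolding complex_cyclotomic_def using assms
    by (intro prod.UNION_disjoint)
       (auto intro: finite_prim_roots dvd_pos_nat dest: prim_roots_unique)
  finally show ?thesis .
qed

lemma lead_coeff_complex_cyclotomic: "lead_coeff (complex_cyclotomic n) = 1"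
  by (simp add: complex_cyclotomic_def lead_coeff_prod)

lemma cis_2pi_div_mod:
  assumes "n > 0"
  shows "cis (2 * pi * real k / real n) = cis (2 * pi * real (k mod n) / real n)"
proof -
  have "real k = real n * real (k div n) + real (k mod n)"
    by (metis of_nat_add of_nat_mult div_mult_mod_eq mult.commute)
  then have "2 * pi * real k / real n = 2 * pi * real (k div n) + 2 * pi * real (k mod n) / real n"
    using assms by (simp add: field_simps)
  then show ?thesis
    by (simp add: cis_mult [symmetric])
qed

lemma cis_2pi_div_eq_iff:
  assumes "n > 0"
  shows "cis (2 * pi * real k / real n) = cis (2 * pi * real l / real n) \<longleftrightarrow> k mod n = l mod n"
proof -
  have "inj_on (\<lambda>k. cis (2 * pi * real k / real n)) {..<n}"
    using bij_betw_roots_unity[OF assms] by (simp add: bij_betw_def)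
  then show ?thesis
    using assms by (auto simp: cis_2pi_div_mod[of n k] cis_2pi_div_mod[of n l] inj_on_def)
qed

lemma cis_2pi_div_power_eq_1_iff:
  assumes "n > 0"
  shows "cis (2 * pi * real k / real n) ^ d = 1 \<longleftrightarrow> n dvd k * d"
proof -
  have "cis (2 * pi * real k / real n) ^ d = cis (2 * pi * real (k * d) / real n)"
    by (simp add: DeMoivre field_simps)
  then show ?thesis
    using cis_2pi_div_eq_iff[OF assms, of "k * d" 0] by (simp add: mod_eq_0_iff_dvd)
qed

lemma coprime_iff_dvd_mult_imp_dvd:
  fixes k n :: nat
  assumes "n > 0"
  shows "coprime k n \<longleftrightarrow> (\<forall>d. n dvd k * d \<longrightarrow> n dvd d)"
proof (intro iffI allI impI)
  assume cancel: "\<forall>d. n dvd k * d \<longrightarrow> n dvd d"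
  define g where "g = gcd k n"
  have "g > 0" "n div g > 0"
    using assms by (simp_all add: g_def div_greater_zero_iff)
  have "k * (n div g) = (k div g) * n"
    unfolding g_def by (metis div_mult_swap dvd_div_mult gcd_dvd1 gcd_dvd2)
  then have "n dvd n div g"
    using cancel by (metis dvd_triv_right)
  then have "n \<le> n div g"
    using \<open>n div g > 0\<close> by (simp add: dvd_imp_le)
  then have "g \<le> 1"
    using assms \<open>g > 0\<close> by (meson div_less_dividend leD leI)
  then have "g = 1"
    using \<open>g > 0\<close> by linarith
  then show "coprime k n"
    by (simp add: g_def coprime_iff_gcd_eq_1)
qed (metis coprime_commute coprime_dvd_mult_right_iff)

lemma cis_2pi_div_in_prim_roots_iff:
  assumes "n > 0"
  shows "cis (2 * pi * real k / real n) \<in> prim_roots n \<longleftrightarrow> coprime k n"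
proof -
  have "(\<forall>d. n dvd k * d \<longleftrightarrow> n dvd d) \<longleftrightarrow> (\<forall>d. n dvd k * d \<longrightarrow> n dvd d)"
    by (meson dvd_mult)
  then show ?thesis
    by (simp add: prim_roots_def cis_2pi_div_power_eq_1_iff[OF assms]
        coprime_iff_dvd_mult_imp_dvd[OF assms])
qed

lemma bij_betw_coprime_prim_roots:
  assumes "n > 0"
  shows "bij_betw (\<lambda>k. cis (2 * pi * real k / real n)) {k\<in>{1..n}. coprime k n} (prim_roots n)"
  unfolding bij_betw_def
proof (intro conjI inj_onI subset_antisym subsetI)
  fix k l
  assume "k \<in> {k\<in>{1..n}. coprime k n}" "l \<in> {k\<in>{1..n}. coprime k n}"
    and "cis (2 * pi * real k / real n) = cis (2 * pi * real l / real n)"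
  then show "k = l"
    using cis_2pi_div_eq_iff[OF assms, of k l] by (cases "k = n"; cases "l = n") auto
next
  fix z
  assume z: "z \<in> prim_roots n"
  then obtain j where j: "j < n" "z = cis (2 * pi * real j / real n)"
    using bij_betw_roots_unity[OF assms] prim_roots_power_eq_1 by (force simp: bij_betw_def)
  define k where "k = (if j = 0 then n else j)"
  have zk: "z = cis (2 * pi * real k / real n)"
    using j cis_2pi_div_mod[OF assms, of n] by (simp add: k_def)
  moreover have "coprime k n"
    using z zk cis_2pi_div_in_prim_roots_iff[OF assms] by simp
  moreover have "k \<in> {1..n}"
    using j by (simp add: k_def)
  ultimately show "z \<in> (\<lambda>k. cis (2 * pi * real k / real n)) ` {k\<in>{1..n}. coprime k n}"
    by blast
next
  fix z
  assume "z \<in> (\<lambda>k. cis (2 * pi * real k / real n)) ` {k\<in>{1..n}. coprime k n}"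
  then show "z \<in> prim_roots n"
    using cis_2pi_div_in_prim_roots_iff[OF assms] by blast
qed

lemma prod_coprime_eq_complex_cyclotomic:
  assumes "n > 0"
  shows "(\<Prod>k\<in>{k\<in>{1..n}. coprime k n}. [:- cis (2 * pi * real k / real n), 1:]) =
    complex_cyclotomic n"
  unfolding complex_cyclotomic_def
  using prod.reindex_bij_betw[OF bij_betw_coprime_prim_roots[OF assms], of "\<lambda>z. [:-z, 1:]"] by simp

lemma map_poly_of_int_add:
  "map_poly of_int (p + q) = (map_poly of_int p + map_poly of_int q :: 'a::comm_ring_1 poly)"
  by (simp add: poly_eq_iff coeff_map_poly)

lemma map_poly_of_int_diff:
  "map_poly of_int (p - q) = (map_poly of_int p - map_poly of_int q :: 'a::comm_ring_1 poly)"
  by (simp add: poly_eq_iff coeff_map_poly)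

lemma map_poly_of_int_mult:
  "map_poly of_int (p * q) = (map_poly of_int p * map_poly of_int q :: 'a::comm_ring_1 poly)"
  by (simp add: poly_eq_iff coeff_map_poly coeff_mult)

lemma map_poly_of_int_prod:
  "map_poly of_int (\<Prod>x\<in>A. f x) = (\<Prod>x\<in>A. map_poly of_int (f x) :: 'a::comm_ring_1 poly)"
  by (induction A rule: infinite_finite_induct) (auto simp: map_poly_of_int_mult)

lemma map_poly_of_int_pcompose:
  "map_poly of_int (pcompose p q) =
    (pcompose (map_poly of_int p) (map_poly of_int q) :: 'a::comm_ring_1 poly)"
  by (induction p rule: pCons_induct)
     (simp_all add: pcompose_pCons map_poly_pCons map_poly_of_int_add map_poly_of_int_mult)

lemma map_poly_of_int_eq_iff:
  "(map_poly of_int p :: 'a::ring_char_0 poly) = map_poly of_int q \<longleftrightarrow> p = q"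
  by (simp add: poly_eq_iff coeff_map_poly)

lemma degree_map_poly_of_int: "degree (map_poly of_int p :: 'a::ring_char_0 poly) = degree p"
  by (cases "p = 0") (simp_all add: degree_map_poly)

lemma lead_coeff_map_poly_of_int:
  "lead_coeff (map_poly of_int p :: 'a::ring_char_0 poly) = of_int (lead_coeff p)"
  by (simp add: degree_map_poly_of_int coeff_map_poly)

lemma map_poly_of_int_quotient_integral:
  fixes F G :: "int poly" and Q :: "'a::{idom,ring_char_0} poly"
  assumes monic: "lead_coeff G = 1"
    and eq: "map_poly of_int F = map_poly of_int G * Q"
  shows "\<exists>Q'. Q = map_poly of_int Q'"
proof -
  have "G \<noteq> 0"
    using monic by auto
  obtain Q' R where qr: "pseudo_divmod F G = (Q', R)"
    by force
  have F: "F = G * Q' + R"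
    using pseudo_divmod(1)[OF \<open>G \<noteq> 0\<close> qr] monic by simp
  have R: "R = 0 \<or> degree R < degree G"
    using pseudo_divmod(2)[OF \<open>G \<noteq> 0\<close> qr] .
  have key: "map_poly of_int G * (Q - map_poly of_int Q') = (map_poly of_int R :: 'a poly)"
    using eq unfolding F by (simp add: map_poly_of_int_add map_poly_of_int_mult algebra_simps)
  have "Q = map_poly of_int Q'"
  proof (rule ccontr)
    assume ne: "Q \<noteq> map_poly of_int Q'"
    have "map_poly of_int G \<noteq> (0 :: 'a poly)"
      using \<open>G \<noteq> 0\<close> map_poly_of_int_eq_iff[of G 0] by simp
    with ne key have "R \<noteq> 0"
      by auto
    with key have "degree (map_poly of_int G * (Q - map_poly of_int Q')) < degree G"
      using R by (simp add: degree_map_poly_of_int)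
    with ne \<open>map_poly of_int G \<noteq> 0\<close> show False
      by (simp add: degree_mult_eq degree_map_poly_of_int)
  qed
  then show ?thesis ..
qed

lemma complex_cyclotomic_integral: "n > 0 \<Longrightarrow> \<exists>P. map_poly of_int P = complex_cyclotomic n"
proof (induction n rule: less_induct)
  case (less n)
  define D where "D = {d. d dvd n \<and> d < n}"
  have "finite D" "n \<notin> D"
    using less.prems by (auto simp: D_def)
  have "\<forall>d\<in>D. \<exists>P. map_poly of_int P = complex_cyclotomic d"
    using less by (auto simp: D_def intro: dvd_pos_nat[OF less.prems])
  then obtain F where F: "\<forall>d\<in>D. map_poly of_int (F d) = complex_cyclotomic d"
    by metis
  define G where "G = (\<Prod>d\<in>D. F d)"
  have G: "map_poly of_int G = (\<Prod>d\<in>D. complex_cyclotomic d)"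
    unfolding G_def map_poly_of_int_prod using F by simp
  then have "lead_coeff (map_poly of_int G :: complex poly) = 1"
    by (simp add: lead_coeff_prod lead_coeff_complex_cyclotomic)
  then have "lead_coeff G = 1"
    by (simp add: lead_coeff_map_poly_of_int)
  have "{d. d dvd n} = insert n D"
    using less.prems by (auto simp: D_def dvd_imp_le le_neq_implies_less)
  then have "map_poly of_int (monom 1 n - 1) = map_poly of_int G * complex_cyclotomic n"
    using monom_minus_one_eq_prod_complex_cyclotomic[OF less.prems] G \<open>finite D\<close> \<open>n \<notin> D\<close>
    by (simp add: map_poly_monom map_poly_of_int_diff mult.commute)
  then show ?case
    using map_poly_of_int_quotient_integral[OF \<open>lead_coeff G = 1\<close>] by metis
qed

lemma map_poly_of_int_cyclotomic:
  assumes "n > 0"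
  shows "map_poly of_int (cyclotomic n) = complex_cyclotomic n"
proof -
  obtain P where P: "map_poly of_int P = complex_cyclotomic n"
    using complex_cyclotomic_integral assms by blast
  have "(THE p. map_poly of_int p = complex_cyclotomic n) = P"
    by (rule the_equality) (auto simp: P [symmetric] map_poly_of_int_eq_iff)
  with P show ?thesis
    unfolding cyclotomic_def prod_coprime_eq_complex_cyclotomic[OF assms] by simp
qed

lemma lead_coeff_cyclotomic: "n > 0 \<Longrightarrow> lead_coeff (cyclotomic n) = 1"
  using map_poly_of_int_cyclotomic[of n] lead_coeff_complex_cyclotomic[of n]
    lead_coeff_map_poly_of_int[of "cyclotomic n", where 'a = complex]
  by simp

lemma dvd_prime_mult_iff_cases:
  fixes e N p :: nat
  assumes p: "prime p" and "N > 0"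
  shows "(\<forall>d. e dvd p * d \<longleftrightarrow> N dvd d) \<longleftrightarrow> e = N * p \<or> (e = N \<and> \<not> p dvd N)"
proof
  assume E: "\<forall>d. e dvd p * d \<longleftrightarrow> N dvd d"
  then obtain t where t: "e = N * t"
    by (metis dvd_mult dvdE dvd_refl)
  have "N * t dvd N * p"
    using E t by (metis dvd_refl mult.commute)
  then have "t dvd p"
    using \<open>N > 0\<close> by simp
  then have "t = 1 \<or> t = p"
    using p by (simp add: prime_nat_iff)
  moreover have "\<not> p dvd N" if "t = 1"
  proof
    assume "p dvd N"
    then obtain s where s: "N = p * s"
      by (elim dvdE)
    then have "e dvd p * s"
      using t that by simp
    then have "N dvd s"
      using E by blast
    moreover have "0 < s" "s < N"
      using s \<open>N > 0\<close> prime_gt_1_nat[OF p] by (auto intro!: Nat.gr0I)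
    ultimately show False
      by (simp add: nat_dvd_not_less)
  qed
  ultimately show "e = N * p \<or> (e = N \<and> \<not> p dvd N)"
    using t by auto
next
  assume "e = N * p \<or> (e = N \<and> \<not> p dvd N)"
  moreover have "coprime N p" if "\<not> p dvd N"
    using that p prime_imp_coprime coprime_commute by blast
  ultimately show "\<forall>d. e dvd p * d \<longleftrightarrow> N dvd d"
    using prime_gt_0_nat[OF p] coprime_dvd_mult_right_iff[of N p] by (auto simp: mult.commute[of N])
qed

lemma power_in_prim_roots_iff:
  "\<eta> \<in> prim_roots e \<Longrightarrow> \<eta> ^ p \<in> prim_roots N \<longleftrightarrow> (\<forall>d. e dvd p * d \<longleftrightarrow> N dvd d)"
  by (simp add: prim_roots_def flip: power_mult)

lemma power_prime_in_prim_roots_iff: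
  assumes p: "prime p" and "N > 0"
  shows "\<eta> ^ p \<in> prim_roots N \<longleftrightarrow> \<eta> \<in> prim_roots (N * p) \<or> (\<not> p dvd N \<and> \<eta> \<in> prim_roots N)"
proof
  assume root: "\<eta> ^ p \<in> prim_roots N"
  then have "\<eta> ^ (p * N) = 1"
    by (simp add: power_mult prim_roots_power_eq_1)
  moreover have "p * N > 0"
    using p \<open>N > 0\<close> prime_gt_0_nat by simp
  ultimately obtain e where "\<And>d. \<eta> ^ d = 1 \<longleftrightarrow> e dvd d"
    using root_of_unity_order_exists by metis
  then have e: "\<eta> \<in> prim_roots e"
    by (simp add: prim_roots_def)
  have "e = N * p \<or> (e = N \<and> \<not> p dvd N)"
    using root power_in_prim_roots_iff[OF e, of p N] dvd_prime_mult_iff_cases[OF assms, of e]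
    by simp
  with e show "\<eta> \<in> prim_roots (N * p) \<or> (\<not> p dvd N \<and> \<eta> \<in> prim_roots N)"
    by auto
next
  assume "\<eta> \<in> prim_roots (N * p) \<or> (\<not> p dvd N \<and> \<eta> \<in> prim_roots N)"
  then show "\<eta> ^ p \<in> prim_roots N"
  proof
    assume "\<eta> \<in> prim_roots (N * p)"
    then show ?thesis
      using power_in_prim_roots_iff[of \<eta> "N * p" p N] dvd_prime_mult_iff_cases[OF assms, of "N * p"]
      by simp
  next
    assume "\<not> p dvd N \<and> \<eta> \<in> prim_roots N"
    then show ?thesis
      using power_in_prim_roots_iff[of \<eta> N p N] dvd_prime_mult_iff_cases[OF assms, of N] by simp
  qed
qed

lemma pcompose_prod_linear_monom:
  assumes "finite Z" "0 \<notin> Z" "p > 0"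
  shows "pcompose (\<Prod>z\<in>Z. [:-z, 1:]) (monom 1 p) = (\<Prod>\<eta>\<in>{\<eta>::complex. \<eta> ^ p \<in> Z}. [:-\<eta>, 1:])"
proof -
  have "pcompose [:-z, 1:] (monom 1 p) = monom 1 p - [:z:]" for z :: complex
    by (simp add: pcompose_pCons poly_eq_iff coeff_pCons split: nat.split)
  then have "pcompose (\<Prod>z\<in>Z. [:-z, 1:]) (monom 1 p) = (\<Prod>z\<in>Z. monom 1 p - [:z:])"
    by (simp add: pcompose_prod)
  also have "\<dots> = (\<Prod>z\<in>Z. \<Prod>\<eta>\<in>{\<eta>. \<eta> ^ p = z}. [:-\<eta>, 1:])"
    using assms by (intro prod.cong refl monom_minus_const_eq_prod_roots) auto
  also have "\<dots> = (\<Prod>\<eta>\<in>(\<Union>z\<in>Z. {\<eta>. \<eta> ^ p = z}). [:-\<eta>, 1:])"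
    using assms by (intro prod.UNION_disjoint [symmetric]) auto
  also have "(\<Union>z\<in>Z. {\<eta>. \<eta> ^ p = z}) = {\<eta>. \<eta> ^ p \<in> Z}"
    by auto
  finally show ?thesis .
qed

lemma complex_cyclotomic_pcompose_monom:
  assumes p: "prime p" and "N > 0"
  shows "pcompose (complex_cyclotomic N) (monom 1 p) =
    complex_cyclotomic (N * p) * (if p dvd N then 1 else complex_cyclotomic N)"
proof -
  have "p > 0" "N * p \<noteq> N"
    using assms prime_gt_1_nat[OF p] by auto
  have "0 \<notin> prim_roots N"
    using \<open>N > 0\<close> prim_roots_power_eq_1[of 0 N] by (auto simp: power_0_left)
  have "{\<eta>. \<eta> ^ p \<in> prim_roots N} = prim_roots (N * p) \<union> (if p dvd N then {} else prim_roots N)"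
    using power_prime_in_prim_roots_iff[OF assms] by auto
  moreover have "prim_roots (N * p) \<inter> prim_roots N = {}"
    using \<open>N * p \<noteq> N\<close> prim_roots_unique by blast
  ultimately show ?thesis
    unfolding complex_cyclotomic_def
    using pcompose_prod_linear_monom[OF finite_prim_roots[OF \<open>N > 0\<close>] \<open>0 \<notin> _\<close> \<open>p > 0\<close>]
      \<open>N > 0\<close> \<open>p > 0\<close> by (simp add: finite_prim_roots prod.union_disjoint)
qed

lemma cyclotomic_pcompose_monom:
  assumes p: "prime p" and "N > 0"
  shows "pcompose (cyclotomic N) (monom 1 p) =
    cyclotomic (N * p) * (if p dvd N then 1 else cyclotomic N)"
proof -
  have "p > 0"
    using p prime_gt_0_nat by blast
  then have "(map_poly of_int (pcompose (cyclotomic N) (monom 1 p)) :: complex poly) =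
    map_poly of_int (cyclotomic (N * p) * (if p dvd N then 1 else cyclotomic N))"
    using complex_cyclotomic_pcompose_monom[OF assms] \<open>N > 0\<close>
    by (simp add: map_poly_of_int_pcompose map_poly_monom map_poly_of_int_mult
        map_poly_of_int_cyclotomic)
  then show ?thesis
    by (simp only: map_poly_of_int_eq_iff)
qed

section \<open>Frobenius congruences\<close>

lemma prime_dvd_power_add_minus_powers:
  fixes x y :: "'a::comm_ring_1"
  assumes p: "prime p"
  shows "of_nat p dvd (x + y) ^ p - x ^ p - y ^ p"
proof -
  have "p \<noteq> 0"
    using p by auto
  define t where "t k = of_nat (p choose k) * x ^ k * y ^ (p - k)" for k
  define e where "e k = (if k = p then x ^ p else 0) + (if k = 0 then y ^ p else 0)" for k
  have "of_nat p dvd t k - e k" if "k \<le> p" for k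
  proof (cases "k = 0 \<or> k = p")
    case True
    then show ?thesis
      using \<open>p \<noteq> 0\<close> by (auto simp: t_def e_def)
  next
    case False
    then have "p dvd p choose k"
      using that p dvd_choose_prime[of k p] by auto
    then obtain c where "p choose k = p * c"
      by (elim dvdE)
    with False show ?thesis
      by (simp add: t_def e_def mult.assoc)
  qed
  then have "of_nat p dvd (\<Sum>k\<le>p. t k - e k)"
    by (auto intro!: dvd_sum)
  also have "(\<Sum>k\<le>p. t k - e k) = (x + y) ^ p - x ^ p - y ^ p"
    by (simp add: sum_subtractf binomial_ring t_def e_def sum.distrib)
  finally show ?thesis .
qed

lemma prime_dvd_power_minus_self_int:
  assumes p: "prime p"
  shows "int p dvd a ^ p - a"
proof (induction a rule: int_induct[where k = 0])
  case base
  show ?case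
    using p by (simp add: power_0_left prime_gt_0_nat)
next
  case (step1 i)
  have "(i + 1) ^ p - (i + 1) = ((i + 1) ^ p - i ^ p - 1 ^ p) + (i ^ p - i)"
    by simp
  then show ?case
    using prime_dvd_power_add_minus_powers[OF p, of i 1] step1 by (metis dvd_add)
next
  case (step2 i)
  have "(i - 1) ^ p - (i - 1) = (i ^ p - i) - ((i - 1 + 1) ^ p - (i - 1) ^ p - 1 ^ p)"
    by simp
  then show ?case
    using prime_dvd_power_add_minus_powers[OF p, of "i - 1" 1] step2 by (metis dvd_diff)
qed

lemma prime_dvd_power_minus_pcompose_monom:
  fixes f :: "int poly"
  assumes p: "prime p"
  shows "of_nat p dvd f ^ p - pcompose f (monom 1 p)"
proof (induction f rule: pCons_induct)
  case 0
  show ?case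
    using p by (simp add: power_0_left prime_gt_0_nat)
next
  case (pCons a f)
  define A B where "A = [:a:]" and "B = pCons 0 f"
  have "pCons a f = A + B"
    by (simp add: A_def B_def)
  moreover have "B ^ p = monom 1 p * f ^ p"
  proof -
    have "B = monom 1 1 * f"
      by (simp add: B_def monom_Suc)
    then show ?thesis
      by (simp add: power_mult_distrib monom_power)
  qed
  moreover have "pcompose (pCons a f) (monom 1 p) = A + monom 1 p * pcompose f (monom 1 p)"
    by (simp add: pcompose_pCons A_def)
  ultimately have split: "pCons a f ^ p - pcompose (pCons a f) (monom 1 p) =
      ((A + B) ^ p - A ^ p - B ^ p) + (A ^ p - A) + monom 1 p * (f ^ p - pcompose f (monom 1 p))"
    by (simp add: algebra_simps)
  have "of_nat p dvd (A + B) ^ p - A ^ p - B ^ p"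
    by (rule prime_dvd_power_add_minus_powers[OF p])
  moreover have "of_nat p dvd A ^ p - A"
  proof -
    have "A ^ p - A = [:a ^ p - a:]"
      by (simp add: A_def poly_const_pow)
    then show ?thesis
      using prime_dvd_power_minus_self_int[OF p, of a] by (simp add: of_nat_poly)
  qed
  ultimately show ?case
    unfolding split using pCons.IH by (intro dvd_add dvd_mult) auto
qed

lemma prime_dvd_mult_monic_imp_dvd:
  fixes f g :: "int poly"
  assumes p: "prime p" and monic: "lead_coeff f = 1" and dvd: "of_nat p dvd f * g"
  shows "of_nat p dvd g"
proof -
  have "int p dvd content f * content g"
    using dvd by (simp add: of_nat_poly const_poly_dvd_iff_dvd_content content_mult)
  moreover have "\<not> int p dvd content f"
    using content_dvd_coeff[of f "degree f"] monic p
    by (metis dvd_trans int_dvd_int_iff nat_dvd_1_iff_1 not_prime_1 of_nat_1)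
  ultimately have "int p dvd content g"
    using p prime_dvd_mult_iff by (metis prime_nat_int_transfer)
  then show ?thesis
    by (simp add: of_nat_poly const_poly_dvd_iff_dvd_content)
qed

section \<open>Nilpotence modulo an ideal\<close>

text \<open>\<open>nilpotent_mod \<pi> f g\<close>: \<open>g\<close> is nilpotent in the quotient by the ideal \<open>(\<pi>, f)\<close>.\<close>

definition nilpotent_mod :: "'a::comm_ring_1 \<Rightarrow> 'a \<Rightarrow> 'a \<Rightarrow> bool" where
  "nilpotent_mod \<pi> f g \<longleftrightarrow> (\<exists>c u. \<pi> dvd g ^ c - f * u)"

lemma nilpotent_mod_refl: "nilpotent_mod \<pi> f f"
  unfolding nilpotent_mod_def by (rule exI[of _ 1], rule exI[of _ 1]) simp

lemma nilpotent_mod_trans: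
  assumes "nilpotent_mod \<pi> f g" "nilpotent_mod \<pi> g h"
  shows "nilpotent_mod \<pi> f h"
proof -
  obtain c u where fg: "\<pi> dvd g ^ c - f * u"
    using assms(1) unfolding nilpotent_mod_def by blast
  obtain d v where gh: "\<pi> dvd h ^ d - g * v"
    using assms(2) unfolding nilpotent_mod_def by blast
  then have "\<pi> dvd (h ^ d) ^ c - (g * v) ^ c"
    by (metis power_diff_sumr2 dvd_mult2)
  with fg have "\<pi> dvd ((h ^ d) ^ c - (g * v) ^ c) + v ^ c * (g ^ c - f * u)"
    by simp
  also have "\<dots> = h ^ (d * c) - f * (u * v ^ c)"
    by (simp add: algebra_simps flip: power_mult)
  finally show ?thesis
    unfolding nilpotent_mod_def by blast
qed

lemma power_add_in_ideal:
  fixes x y :: "'a::comm_ring_1"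
  shows "\<exists>s t. (x + y) ^ (a + j) = x ^ a * s + y ^ j * t"
proof (induction a arbitrary: j)
  case 0
  show ?case
    by (rule exI[of _ "(x + y) ^ j"], rule exI[of _ 0]) simp
next
  case (Suc a)
  note outer_IH = Suc.IH
  show ?case
  proof (induction j)
    case 0
    show ?case
      by (rule exI[of _ 0], rule exI[of _ "(x + y) ^ Suc a"]) simp
  next
    case (Suc j)
    obtain s1 t1 where 1: "(x + y) ^ (a + Suc j) = x ^ a * s1 + y ^ Suc j * t1"
      using outer_IH by blast
    obtain s2 t2 where 2: "(x + y) ^ (Suc a + j) = x ^ Suc a * s2 + y ^ j * t2"
      using Suc.IH by blast
    have "(x + y) ^ (Suc a + Suc j) = (x + y) ^ (a + Suc j) * x + (x + y) ^ (Suc a + j) * y"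
      by (simp add: algebra_simps)
    also have "\<dots> = x ^ Suc a * (s1 + s2 * y) + y ^ Suc j * (t1 * x + t2)"
      unfolding 1 2 by (simp add: algebra_simps)
    finally show ?case
      by blast
  qed
qed

lemma nilpotent_mod_power_in_ideal:
  assumes "nilpotent_mod \<pi> f g"
  shows "\<exists>b s t. g ^ b = f ^ a * s + \<pi> ^ j * t"
proof -
  obtain c u w where "g ^ c - f * u = \<pi> * w"
    using assms unfolding nilpotent_mod_def by blast
  then have "g ^ (c * (a + j)) = (f * u + \<pi> * w) ^ (a + j)"
    by (simp only: power_mult) (simp add: algebra_simps)
  also obtain s t where "\<dots> = (f * u) ^ a * s + (\<pi> * w) ^ j * t"
    using power_add_in_ideal by blast
  also have "\<dots> = f ^ a * (u ^ a * s) + \<pi> ^ j * (w ^ j * t)"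
    by (simp add: algebra_simps)
  finally show ?thesis
    by blast
qed

lemma nilpotent_mod_cyclotomic_mult_prime:
  assumes p: "prime p" and "N > 0"
  shows "nilpotent_mod (of_nat p) (cyclotomic (N * p)) (cyclotomic N)"
  using prime_dvd_power_minus_pcompose_monom[OF p, of "cyclotomic N"]
  unfolding nilpotent_mod_def cyclotomic_pcompose_monom[OF assms] by blast

lemma nilpotent_mod_cyclotomic_mult_prime':
  assumes p: "prime p" and "N > 0"
  shows "nilpotent_mod (of_nat p) (cyclotomic N) (cyclotomic (N * p))"
proof -
  let ?\<Phi> = "cyclotomic N" and ?\<Phi>p = "cyclotomic (N * p)"
  have frob: "of_nat p dvd - (?\<Phi> ^ p - pcompose ?\<Phi> (monom 1 p))"
    using prime_dvd_power_minus_pcompose_monom[OF p] by (simp only: dvd_minus_iff)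
  obtain q where q: "p = Suc (Suc q)"
    using prime_gt_1_nat[OF p] by (metis less_imp_Suc_add plus_1_eq_Suc)
  then have pow: "?\<Phi> ^ p = ?\<Phi> * (?\<Phi> * ?\<Phi> ^ q)"
    by simp
  show ?thesis
  proof (cases "p dvd N")
    case True
    then have "- (?\<Phi> ^ p - pcompose ?\<Phi> (monom 1 p)) = ?\<Phi>p ^ 1 - ?\<Phi> * (?\<Phi> * ?\<Phi> ^ q)"
      by (simp add: cyclotomic_pcompose_monom[OF assms] pow)
    with frob show ?thesis
      unfolding nilpotent_mod_def by metis
  next
    case False
    then have "- (?\<Phi> ^ p - pcompose ?\<Phi> (monom 1 p)) = ?\<Phi> * (?\<Phi>p - ?\<Phi> * ?\<Phi> ^ q)"
      by (simp add: cyclotomic_pcompose_monom[OF assms] pow right_diff_distrib mult.commute)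
    with frob have "of_nat p dvd ?\<Phi>p ^ 1 - ?\<Phi> * ?\<Phi> ^ q"
      using prime_dvd_mult_monic_imp_dvd[OF p lead_coeff_cyclotomic[OF \<open>N > 0\<close>]]
      by (simp only: power_one_right)
    then show ?thesis
      unfolding nilpotent_mod_def by blast
  qed
qed

lemma nilpotent_mod_cyclotomic_mult_prime_power:
  assumes p: "prime p" and "N > 0"
  shows "nilpotent_mod (of_nat p) (cyclotomic (N * p ^ k)) (cyclotomic N) \<and>
    nilpotent_mod (of_nat p) (cyclotomic N) (cyclotomic (N * p ^ k))"
proof (induction k)
  case 0
  show ?case
    by (simp add: nilpotent_mod_refl)
next
  case (Suc k)
  have "N * p ^ k > 0"
    using \<open>N > 0\<close> p prime_gt_0_nat by simp
  moreover have "N * p ^ Suc k = (N * p ^ k) * p"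
    by (simp add: mult.assoc mult.commute)
  ultimately show ?case
    using nilpotent_mod_cyclotomic_mult_prime[OF p] nilpotent_mod_cyclotomic_mult_prime'[OF p]
      Suc.IH nilpotent_mod_trans by metis
qed

section \<open>The \<open>\<int>[q]\<close>-module \<open>A[q]\<close>\<close>

lemma zmult_0_left [simp]: "zmult 0 x = 0"
  by (simp add: zmult_def)

lemma zmult_0_right [simp]: "zmult k 0 = 0"
  by (simp add: zmult_def)

lemma zmult_add1_left: "zmult (k + 1) x = zmult k x + x"
proof (cases "k \<ge> 0")
  case True
  then have "nat (k + 1) = Suc (nat k)" by simp
  then show ?thesis using True by (simp add: zmult_def)
next
  case False
  then have k: "k + 1 \<le> 0" by simp
  have e: "nat (- k) = Suc (nat (- (k + 1)))" using k by simp
  have "zmult (k + 1) x = - (\<Sum>i<nat (- (k + 1)). x)"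
    using k by (cases "k + 1 = 0") (simp_all add: zmult_def)
  moreover have "zmult k x = - (\<Sum>i<nat (- (k + 1)). x) - x"
    using False by (simp add: zmult_def e)
  ultimately show ?thesis by simp
qed

lemma zmult_diff1_left: "zmult (k - 1) x = zmult k x - x"
  using zmult_add1_left[of "k - 1" x] by (simp add: algebra_simps)

lemma zmult_add_left: "zmult (a + b) x = zmult a x + zmult b x"
proof (induction b rule: int_induct[where k = 0])
  case base
  then show ?case by simp
next
  case (step1 i)
  have "zmult (a + (i + 1)) x = zmult ((a + i) + 1) x" by (simp only: add.assoc)
  also have "\<dots> = zmult (a + i) x + x" by (rule zmult_add1_left)
  also have "\<dots> = zmult a x + (zmult i x + x)" using step1 by (simp add: add.assoc)
  also have "zmult i x + x = zmult (i + 1) x" by (simp only: zmult_add1_left)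
  finally show ?case .
next
  case (step2 i)
  have "zmult (a + (i - 1)) x = zmult ((a + i) - 1) x" by (simp only: add_diff_eq)
  also have "\<dots> = zmult (a + i) x - x" by (rule zmult_diff1_left)
  also have "\<dots> = zmult a x + (zmult i x - x)" using step2 by (simp add: add_diff_eq)
  also have "zmult i x - x = zmult (i - 1) x" by (simp only: zmult_diff1_left)
  finally show ?case .
qed

lemma zmult_add_right: "zmult k (x + y) = zmult k x + zmult k y"
proof (induction k rule: int_induct[where k = 0])
  case base
  then show ?case by simp
next
  case (step1 i)
  then show ?case by (simp only: zmult_add1_left) (simp add: add_ac)
next
  case (step2 i)
  then show ?case by (simp only: zmult_diff1_left) (simp add: algebra_simps)
qed

lemma zmult_minus_right: "zmult k (- x) = - zmult k x"
proof -
  have "zmult k x + zmult k (- x) = 0" using zmult_add_right[of k x "- x"] by simp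
  then show ?thesis by (metis neg_eq_iff_add_eq_0)
qed

lemma zmult_diff_right: "zmult k (x - y) = zmult k x - zmult k y"
  using zmult_add_right[of k x "- y"] zmult_minus_right[of k y] by simp

lemma zmult_minus_left: "zmult (- a) x = - zmult a x"
proof -
  have "zmult a x + zmult (- a) x = 0" using zmult_add_left[of a "- a" x] by simp
  then show ?thesis by (metis neg_eq_iff_add_eq_0)
qed

lemma zmult_1_left [simp]: "zmult 1 x = x"
  using zmult_add1_left[of 0 x] by simp

lemma zmult_mult_left: "zmult (a * b) x = zmult a (zmult b x)"
proof (induction a rule: int_induct[where k = 0])
  case base
  then show ?case by simp
next
  case (step1 i)
  then show ?case
    by (simp only: distrib_right mult_1_left zmult_add_left zmult_add1_left zmult_1_left)
next
  case (step2 i)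
  have "zmult ((i - 1) * b) x = zmult (i * b + - b) x" by (simp add: algebra_simps)
  also have "\<dots> = zmult (i - 1) (zmult b x)"
    using step2 by (simp only: zmult_add_left zmult_minus_left zmult_diff1_left) simp
  finally show ?case .
qed

lemma zmult_sum_right: "zmult k (\<Sum>i\<in>A. f i) = (\<Sum>i\<in>A. zmult k (f i))"
  by (induction A rule: infinite_finite_induct) (simp_all add: zmult_add_right)

lemma coeff_funpow_pCons_0: "coeff ((pCons 0 ^^ i) P) k = (if i \<le> k then coeff P (k - i) else 0)"
proof (induction i arbitrary: k)
  case 0
  then show ?case
    by simp
next
  case (Suc i)
  show ?case
    by (cases k) (simp_all add: Suc.IH coeff_pCons)
qed

lemma coeff_map_poly_zmult: "coeff (map_poly (zmult c) p) n = zmult c (coeff p n)"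
  by (simp add: coeff_map_poly)

lemma coeff_zpoly_act: "coeff (zpoly_act f u) k = (\<Sum>i\<le>k. zmult (coeff f i) (coeff u (k - i)))"
proof -
  have "coeff (zpoly_act f u) k =
      (\<Sum>i\<le>degree f. if i \<le> k then zmult (coeff f i) (coeff u (k - i)) else 0)"
    by (simp add: zpoly_act_def coeff_sum coeff_funpow_pCons_0 coeff_map_poly_zmult cong: if_cong)
  also have "\<dots> = (\<Sum>i\<le>degree f + k. if i \<le> k then zmult (coeff f i) (coeff u (k - i)) else 0)"
    by (rule sum.mono_neutral_left) (auto simp: coeff_eq_0)
  also have "\<dots> = (\<Sum>i\<le>k. zmult (coeff f i) (coeff u (k - i)))"
    by (rule sum.mono_neutral_cong_right) auto
  finally show ?thesis .
qed

lemma zpoly_act_add_left: "zpoly_act (f + g) u = zpoly_act f u + zpoly_act g u"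
  by (simp add: poly_eq_iff coeff_zpoly_act zmult_add_left sum.distrib)

lemma zpoly_act_add_right: "zpoly_act f (u + v) = zpoly_act f u + zpoly_act f v"
  by (simp add: poly_eq_iff coeff_zpoly_act zmult_add_right sum.distrib)

lemma zpoly_act_0_right [simp]: "zpoly_act f 0 = 0"
  by (simp add: poly_eq_iff coeff_zpoly_act)

lemma zpoly_act_0_left [simp]: "zpoly_act 0 u = 0"
  by (simp add: poly_eq_iff coeff_zpoly_act)

lemma zpoly_act_diff_right: "zpoly_act f (u - v) = zpoly_act f u - zpoly_act f v"
  by (simp add: poly_eq_iff coeff_zpoly_act zmult_diff_right sum_subtractf)

lemma map_poly_zmult_add: "map_poly (zmult c) (u + v) = map_poly (zmult c) u + map_poly (zmult c) v"
  by (simp add: poly_eq_iff coeff_map_poly_zmult zmult_add_right)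

lemma map_poly_zmult_0: "map_poly (zmult 0) u = 0"
  by (simp add: poly_eq_iff coeff_map_poly_zmult)

lemma zpoly_act_pCons: "zpoly_act (pCons a f) u = map_poly (zmult a) u + pCons 0 (zpoly_act f u)"
proof (rule poly_eqI)
  fix k
  show "coeff (zpoly_act (pCons a f) u) k =
    coeff (map_poly (zmult a) u + pCons 0 (zpoly_act f u)) k"
  proof (cases k)
    case 0
    then show ?thesis
      by (simp add: coeff_zpoly_act coeff_map_poly_zmult)
  next
    case (Suc k')
    have "coeff (zpoly_act (pCons a f) u) k =
        zmult a (coeff u (Suc k')) + (\<Sum>i\<le>k'. zmult (coeff f i) (coeff u (k' - i)))"
      unfolding coeff_zpoly_act Suc sum.atMost_Suc_shift by simp
    then show ?thesis
      by (simp add: Suc coeff_zpoly_act coeff_map_poly_zmult)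
  qed
qed

lemma zpoly_act_smult: "zpoly_act (smult c g) u = map_poly (zmult c) (zpoly_act g u)"
  by (simp add: poly_eq_iff coeff_zpoly_act coeff_map_poly_zmult zmult_mult_left zmult_sum_right)

lemma zpoly_act_mult: "zpoly_act (f * g) u = zpoly_act f (zpoly_act g u)"
proof (induction f rule: pCons_induct)
  case 0
  then show ?case
    by simp
next
  case (pCons a f)
  have "zpoly_act (pCons a f * g) u = zpoly_act (smult a g + pCons 0 (f * g)) u"
    by simp
  also have "\<dots> = map_poly (zmult a) (zpoly_act g u) + pCons 0 (zpoly_act f (zpoly_act g u))"
    by (simp add: zpoly_act_add_left zpoly_act_smult zpoly_act_pCons map_poly_zmult_0 pCons.IH)
  also have "\<dots> = zpoly_act (pCons a f) (zpoly_act g u)"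
    by (simp add: zpoly_act_pCons)
  finally show ?case .
qed

lemma zpoly_act_const: "zpoly_act [:c:] u = map_poly (zmult c) u"
  by (simp add: zpoly_act_pCons)

lemma map_poly_zmult_zpoly_act:
  "map_poly (zmult c) (zpoly_act f u) = zpoly_act f (map_poly (zmult c) u)"
proof -
  have "map_poly (zmult c) (zpoly_act f u) = zpoly_act (f * [:c:]) u"
    by (simp add: zpoly_act_smult mult.commute[of f])
  also have "\<dots> = zpoly_act f (map_poly (zmult c) u)"
    by (simp only: zpoly_act_mult zpoly_act_const)
  finally show ?thesis .
qed

lemma coeff_zpoly_act_top:
  assumes "lead_coeff f = 1"
  shows "coeff (zpoly_act f u) (degree f + degree u) = lead_coeff u"
proof -
  let ?K = "degree f + degree u"
  have "zmult (coeff f i) (coeff u (?K - i)) = 0" if "i \<noteq> degree f" for i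
    using that by (cases "i < degree f") (simp_all add: coeff_eq_0)
  then have "coeff (zpoly_act f u) ?K = (\<Sum>i\<in>{degree f}. zmult (coeff f i) (coeff u (?K - i)))"
    unfolding coeff_zpoly_act by (intro sum.mono_neutral_right) auto
  then show ?thesis
    using assms by simp
qed

lemma coeff_zpoly_act_above:
  assumes "degree f + degree u < k"
  shows "coeff (zpoly_act f u) k = 0"
proof -
  have "zmult (coeff f i) (coeff u (k - i)) = 0" for i
    using assms by (cases "i \<le> degree f") (simp_all add: coeff_eq_0)
  then show ?thesis
    by (simp add: coeff_zpoly_act)
qed

lemma degree_zpoly_act_monic:
  assumes "lead_coeff f = 1" "u \<noteq> 0"
  shows "degree (zpoly_act f u) = degree f + degree u"
  using coeff_zpoly_act_top[OF assms(1), of u] coeff_zpoly_act_above[of f u] assms(2)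
  by (metis le_antisym le_degree degree_le leading_coeff_0_iff)

lemma zpoly_act_divmod_exists:
  assumes f: "lead_coeff f = 1"
  shows "\<exists>u r. d = zpoly_act f u + r \<and> (r = 0 \<or> degree r < degree f)"
proof (induction "degree d" arbitrary: d rule: less_induct)
  case less
  show ?case
  proof (cases "d = 0 \<or> degree d < degree f")
    case True
    then show ?thesis
      by (intro exI[of _ 0] exI[of _ d]) auto
  next
    case False
    define m where "m = monom (lead_coeff d) (degree d - degree f)"
    define d' where "d' = d - zpoly_act f m"
    have "coeff d' k = 0" if "k \<ge> degree d" for k
      using coeff_zpoly_act_top[OF f, of m] coeff_zpoly_act_above[of f m k] False that
      by (cases "k = degree d") (auto simp: d'_def m_def degree_monom_eq coeff_eq_0)
    then have "d' = 0 \<or> degree d' < degree d"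
      using degree_lessI[of d' "degree d"] by blast
    then have "\<exists>u r. d' = zpoly_act f u + r \<and> (r = 0 \<or> degree r < degree f)"
      using less.hyps by (metis add.right_neutral zpoly_act_0_right)
    then obtain u r where "d = zpoly_act f (u + m) + r" "r = 0 \<or> degree r < degree f"
      by (auto simp: d'_def zpoly_act_add_right algebra_simps)
    then show ?thesis
      by blast
  qed
qed

lemma zpoly_act_remainder_unique:
  assumes f: "lead_coeff f = 1"
    and eq: "zpoly_act f u + r = zpoly_act f u' + r'"
    and r: "r = 0 \<or> degree r < degree f" and r': "r' = 0 \<or> degree r' < degree f"
  shows "r = r'"
proof (rule ccontr)
  assume "r \<noteq> r'"
  have diff: "zpoly_act f (u - u') = r' - r"
    using eq by (simp add: zpoly_act_diff_right algebra_simps)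
  with \<open>r \<noteq> r'\<close> have "u - u' \<noteq> 0"
    by auto
  with diff have "degree f \<le> degree (r' - r)"
    using degree_zpoly_act_monic[OF f] by (metis le_add1)
  moreover have "degree (r' - r) < degree f"
    using r r' \<open>r \<noteq> r'\<close> by (auto intro: degree_diff_less)
  ultimately show False
    by simp
qed

lemma degree_map_poly_zmult_le: "degree (map_poly (zmult c) r) \<le> degree r"
  by (rule degree_le) (auto simp: coeff_map_poly_zmult coeff_eq_0)

text \<open>The remainder of \<open>d\<close> modulo the monic \<open>f\<close> is divisible by every \<open>p ^ j\<close>, hence zero.\<close>

lemma padic_separated_zpoly_act_closed:
  fixes d :: "'a::ab_group_add poly"
  assumes f: "lead_coeff f = 1" and sep: "padic_separated TYPE('a) p"
    and approx: "\<And>j. \<exists>u w. d = zpoly_act f u + map_poly (zmult (int p ^ j)) w"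
  shows "\<exists>u. d = zpoly_act f u"
proof -
  obtain u0 r0 where d: "d = zpoly_act f u0 + r0" and r0: "r0 = 0 \<or> degree r0 < degree f"
    using zpoly_act_divmod_exists[OF f] by blast
  have "coeff r0 k \<in> range (zmult (int p ^ j))" for k j
  proof -
    obtain u w where dw: "d = zpoly_act f u + map_poly (zmult (int p ^ j)) w"
      using approx by blast
    obtain u1 r1 where w: "w = zpoly_act f u1 + r1" and r1: "r1 = 0 \<or> degree r1 < degree f"
      using zpoly_act_divmod_exists[OF f] by blast
    have "d = zpoly_act f (u + map_poly (zmult (int p ^ j)) u1) + map_poly (zmult (int p ^ j)) r1"
      using dw w
      by (simp add: map_poly_zmult_add map_poly_zmult_zpoly_act zpoly_act_add_right algebra_simps)
    moreover have "map_poly (zmult (int p ^ j)) r1 = 0 \<or>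
        degree (map_poly (zmult (int p ^ j)) r1) < degree f"
      using r1 degree_map_poly_zmult_le[of "int p ^ j" r1] by auto
    ultimately have "r0 = map_poly (zmult (int p ^ j)) r1"
      using zpoly_act_remainder_unique[OF f _ r0] d by metis
    then show ?thesis
      by (simp add: coeff_map_poly_zmult)
  qed
  then have "r0 = 0"
    using sep by (auto simp: padic_separated_def poly_eq_iff)
  with d show ?thesis
    by auto
qed

lemma mem_zcoset_iff: "z \<in> zcoset f r \<longleftrightarrow> (\<exists>w. z - r = zpoly_act f w)"
  unfolding zcoset_def zsub_def by (auto simp: diff_eq_eq add.commute)

lemma zcoset_eq_iff: "zcoset f r = zcoset f s \<longleftrightarrow> (\<exists>w. r - s = zpoly_act f w)"
proof
  assume "zcoset f r = zcoset f s"
  moreover have "r \<in> zcoset f r"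
    by (metis mem_zcoset_iff diff_self zpoly_act_0_right)
  ultimately show "\<exists>w. r - s = zpoly_act f w"
    by (simp add: mem_zcoset_iff)
next
  assume "\<exists>w. r - s = zpoly_act f w"
  then obtain w where w: "r - s = zpoly_act f w" ..
  have "z - r = zpoly_act f v \<Longrightarrow> z - s = zpoly_act f (v + w)"
    and "z - s = zpoly_act f v \<Longrightarrow> z - r = zpoly_act f (v - w)" for z v
    using w by (simp_all add: zpoly_act_add_right zpoly_act_diff_right algebra_simps)
  then show "zcoset f r = zcoset f s"
    unfolding set_eq_iff mem_zcoset_iff by blast
qed

section \<open>Agreement of compatible families\<close>

lemma cyc_mon_mono: "U \<subseteq> V \<Longrightarrow> cyc_mon U \<subseteq> cyc_mon V"
  unfolding cyc_mon_def by blast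

lemma cyc_mon_mult_cyclotomic_power:
  assumes "g \<in> cyc_mon U"
  shows "g * cyclotomic m ^ a \<in> cyc_mon (insert m U)"
proof -
  obtain M where "g = prod_mset (image_mset cyclotomic M)" "set_mset M \<subseteq> U"
    using assms unfolding cyc_mon_def by blast
  then have "g * cyclotomic m ^ a = prod_mset (image_mset cyclotomic (M + replicate_mset a m))"
    and "set_mset (M + replicate_mset a m) \<subseteq> insert m U"
    by auto
  then show ?thesis
    unfolding cyc_mon_def by blast
qed

lemma cyc_mon_insert_cases:
  assumes "f \<in> cyc_mon (insert m U)"
  obtains g a where "g \<in> cyc_mon U" "f = g * cyclotomic m ^ a"
proof -
  obtain M where M: "f = prod_mset (image_mset cyclotomic M)" "set_mset M \<subseteq> insert m U"
    using assms unfolding cyc_mon_def by blast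
  define M' where "M' = filter_mset (\<lambda>x. x \<noteq> m) M"
  have split: "M = M' + replicate_mset (count M m) m"
    unfolding M'_def by (metis multiset_partition filter_eq_replicate_mset add.commute)
  have "f = prod_mset (image_mset cyclotomic M') * cyclotomic m ^ count M m"
    using M(1) by (subst (asm) split) simp
  moreover have "set_mset M' \<subseteq> U"
    using M(2) unfolding M'_def by auto
  ultimately show thesis
    using that unfolding cyc_mon_def by blast
qed

lemma lead_coeff_cyc_mon:
  assumes "0 \<notin> S" "f \<in> cyc_mon S"
  shows "lead_coeff f = 1"
proof -
  obtain M where "f = prod_mset (image_mset cyclotomic M)" "set_mset M \<subseteq> S"
    using assms unfolding cyc_mon_def by blast
  moreover have "0 \<notin> set_mset M \<Longrightarrow> lead_coeff (prod_mset (image_mset cyclotomic M)) = 1"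
    by (induction M) (simp_all add: lead_coeff_mult lead_coeff_cyclotomic)
  ultimately show ?thesis
    using assms(1) by blast
qed

lemma completion_coset:
  "x \<in> completion S \<Longrightarrow> f \<in> cyc_mon S \<Longrightarrow> \<exists>r. x f = zcoset f r"
  unfolding completion_def by blast

lemma completion_coset_dvd:
  "x \<in> completion S \<Longrightarrow> f \<in> cyc_mon S \<Longrightarrow> g \<in> cyc_mon S \<Longrightarrow> f dvd g \<Longrightarrow>
    x g = zcoset g r \<Longrightarrow> x f = zcoset f r"
  unfolding completion_def by blast

definition agree_on ::
    "(int poly \<Rightarrow> 'a poly set) \<Rightarrow> (int poly \<Rightarrow> 'a poly set) \<Rightarrow> nat set \<Rightarrow> bool" where
  "agree_on x y U \<longleftrightarrow> (\<forall>f\<in>cyc_mon U. x f = y f)"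

lemma completion_rep_diff_decomp:
  assumes x: "x \<in> completion S" and y: "y \<in> completion S"
    and S: "f \<in> cyc_mon S" "g \<in> cyc_mon S" "h \<in> cyc_mon S" and dvd: "f dvd h" "g dvd h"
    and agree: "x g = y g" and g: "g = f * \<sigma> + smult c \<tau>"
    and r0: "x f = zcoset f r0" and s0: "y f = zcoset f s0"
  shows "\<exists>u w. r0 - s0 = zpoly_act f u + map_poly (zmult c) w"
proof -
  obtain r s where r: "x h = zcoset h r" and s: "y h = zcoset h s"
    using completion_coset x y S(3) by metis
  obtain a where a: "r0 - r = zpoly_act f a"
    using completion_coset_dvd[OF x S(1,3) dvd(1) r] r0 zcoset_eq_iff by metis
  obtain b where b: "s0 - s = zpoly_act f b"
    using completion_coset_dvd[OF y S(1,3) dvd(1) s] s0 zcoset_eq_iff by metis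
  obtain w where w: "r - s = zpoly_act g w"
    using completion_coset_dvd[OF x S(2,3) dvd(2) r] completion_coset_dvd[OF y S(2,3) dvd(2) s]
      agree zcoset_eq_iff by metis
  have "zpoly_act g w = zpoly_act f (zpoly_act \<sigma> w) + map_poly (zmult c) (zpoly_act \<tau> w)"
    unfolding g by (simp only: zpoly_act_add_left zpoly_act_mult zpoly_act_smult)
  with a b w have
    "r0 - s0 = zpoly_act f (a + zpoly_act \<sigma> w - b) + map_poly (zmult c) (zpoly_act \<tau> w)"
    by (simp add: zpoly_act_add_right zpoly_act_diff_right algebra_simps)
  then show ?thesis
    by blast
qed

lemma completion_diff_approx:
  fixes x y :: "int poly \<Rightarrow> 'a::ab_group_add poly set"
  assumes x: "x \<in> completion S" and y: "y \<in> completion S"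
    and "U \<subseteq> S" "n \<in> U" "m \<in> S" and agree: "agree_on x y U"
    and nil: "nilpotent_mod (of_nat p) (cyclotomic m) (cyclotomic n)"
    and g: "g \<in> cyc_mon U" and f: "f = g * cyclotomic m ^ a"
    and r0: "x f = zcoset f r0" and s0: "y f = zcoset f s0"
  shows "\<exists>u w. r0 - s0 = zpoly_act f u + map_poly (zmult (int p ^ j)) w"
proof -
  txt \<open>Multiplying \<open>g\<close> by a power of \<open>\<Phi>\<^sub>n\<close> gives a modulus in \<open>cyc_mon U\<close>, where \<open>x\<close>
    and \<open>y\<close> agree, which is congruent to a multiple of \<open>f\<close> modulo \<open>p ^ j\<close>.\<close>
  obtain b \<sigma> \<tau> where b: "cyclotomic n ^ b = cyclotomic m ^ a * \<sigma> + of_nat p ^ j * \<tau>"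
    using nilpotent_mod_power_in_ideal[OF nil] by blast
  define g' where "g' = g * cyclotomic n ^ b"
  define h where "h = g' * cyclotomic m ^ a"
  have mU: "insert m U \<subseteq> S"
    using \<open>U \<subseteq> S\<close> \<open>m \<in> S\<close> by simp
  have g'U: "g' \<in> cyc_mon U"
    using cyc_mon_mult_cyclotomic_power[OF g, of n b] \<open>n \<in> U\<close> by (simp add: g'_def insert_absorb)
  then have "f \<in> cyc_mon S" "g' \<in> cyc_mon S" "h \<in> cyc_mon S"
    using cyc_mon_mono[OF \<open>U \<subseteq> S\<close>] cyc_mon_mono[OF mU] cyc_mon_mult_cyclotomic_power g
    unfolding h_def f by blast+
  moreover have "h = f * cyclotomic n ^ b"
    by (simp add: h_def g'_def f algebra_simps)
  then have "f dvd h"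
    by simp
  moreover have "g' dvd h"
    by (simp add: h_def)
  moreover have "x g' = y g'"
    using agree g'U unfolding agree_on_def by blast
  moreover have "g' = f * \<sigma> + smult (int p ^ j) (g * \<tau>)"
    by (simp add: g'_def f b of_nat_poly poly_const_pow algebra_simps)
  ultimately show ?thesis
    using completion_rep_diff_decomp[OF x y _ _ _ _ _ _ _ r0 s0] by blast
qed

lemma completion_agree_on_insert:
  fixes x y :: "int poly \<Rightarrow> 'a::ab_group_add poly set"
  assumes x: "x \<in> completion S" and y: "y \<in> completion S" and "0 \<notin> S"
    and "U \<subseteq> S" "n \<in> U" "m \<in> S" and agree: "agree_on x y U"
    and sep: "padic_separated TYPE('a) p"
    and nil: "nilpotent_mod (of_nat p) (cyclotomic m) (cyclotomic n)"
  shows "agree_on x y (insert m U)"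
  unfolding agree_on_def
proof
  fix f
  assume f: "f \<in> cyc_mon (insert m U)"
  then obtain g a where "g \<in> cyc_mon U" "f = g * cyclotomic m ^ a"
    by (rule cyc_mon_insert_cases)
  have fS: "f \<in> cyc_mon S"
    using f cyc_mon_mono[of "insert m U" S] \<open>U \<subseteq> S\<close> \<open>m \<in> S\<close> by blast
  obtain r0 s0 where r0: "x f = zcoset f r0" and s0: "y f = zcoset f s0"
    using completion_coset x y fS by metis
  have "\<exists>u w. r0 - s0 = zpoly_act f u + map_poly (zmult (int p ^ j)) w" for j
    using completion_diff_approx[OF x y \<open>U \<subseteq> S\<close> \<open>n \<in> U\<close> \<open>m \<in> S\<close> agree nil] \<open>g \<in> _\<close>
      \<open>f = _\<close> r0 s0 by blast
  then obtain u where "r0 - s0 = zpoly_act f u"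
    using padic_separated_zpoly_act_closed[OF lead_coeff_cyc_mon[OF \<open>0 \<notin> S\<close> fS] sep] by blast
  then show "x f = y f"
    using r0 s0 zcoset_eq_iff by metis
qed

lemma equiv_A_imp_nilpotent_mod_cyclotomic:
  assumes "equiv_A TYPE('a::ab_group_add) n m" "m > 0" "n > 0"
    and "(UNIV :: 'a set) \<noteq> {0}" "m \<noteq> n"
  shows "\<exists>p. padic_separated TYPE('a) p \<and> nilpotent_mod (of_nat p) (cyclotomic m) (cyclotomic n)"
proof -
  obtain p k where "prime p" "m = n * p ^ k \<or> n = m * p ^ k" "padic_separated TYPE('a) p"
    using assms unfolding equiv_A_def by blast
  then show ?thesis
    using nilpotent_mod_cyclotomic_mult_prime_power assms(2,3) by metis
qed

lemma completion_agree_on_chain: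
  fixes x y :: "int poly \<Rightarrow> 'a::ab_group_add poly set"
  assumes x: "x \<in> completion S" and y: "y \<in> completion S" and "0 \<notin> S"
    and nontrivial: "(UNIV :: 'a set) \<noteq> {0}"
  shows "agree_on x y U \<Longrightarrow> U \<subseteq> S \<Longrightarrow> set ns \<subseteq> S \<Longrightarrow> ns \<noteq> [] \<Longrightarrow> hd ns \<in> U \<Longrightarrow>
    \<forall>i. Suc i < length ns \<longrightarrow> equiv_A TYPE('a) (ns ! i) (ns ! Suc i) \<Longrightarrow>
    agree_on x y (U \<union> set ns)"
proof (induction ns arbitrary: U)
  case Nil
  then show ?case
    by simp
next
  case (Cons n ns)
  show ?case
  proof (cases ns)
    case Nil
    with Cons.prems show ?thesis
      by (simp add: insert_absorb)
  next
    case (Cons m ms)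
    have "n \<in> U" "m \<in> S" "n \<in> S"
      using Cons.prems \<open>ns = m # ms\<close> by auto
    moreover have "equiv_A TYPE('a) n m"
      using Cons.prems(6) \<open>ns = m # ms\<close> by force
    moreover have "m \<noteq> n \<Longrightarrow> \<exists>p. padic_separated TYPE('a) p \<and>
        nilpotent_mod (of_nat p) (cyclotomic m) (cyclotomic n)"
      using equiv_A_imp_nilpotent_mod_cyclotomic \<open>0 \<notin> S\<close> \<open>m \<in> S\<close> \<open>n \<in> S\<close> nontrivial
        \<open>equiv_A TYPE('a) n m\<close> by (metis gr0I)
    ultimately have "agree_on x y (insert m U)"
      using completion_agree_on_insert[OF x y \<open>0 \<notin> S\<close> \<open>U \<subseteq> S\<close>] Cons.prems(1)
      by (cases "m = n") (auto simp: insert_absorb)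
    moreover have "\<forall>i. Suc i < length ns \<longrightarrow> equiv_A TYPE('a) (ns ! i) (ns ! Suc i)"
      using Cons.prems(6) by auto
    ultimately have "agree_on x y (insert m U \<union> set ns)"
      using Cons.IH[of "insert m U"] Cons.prems(2,3) \<open>ns = m # ms\<close> by simp
    then show ?thesis
      using \<open>n \<in> U\<close> \<open>ns = m # ms\<close> by (simp add: insert_absorb)
  qed
qed

lemma agree_on_if_finite_subsets:
  assumes "\<And>F. finite F \<Longrightarrow> F \<subseteq> S \<Longrightarrow> \<exists>U. F \<subseteq> U \<and> agree_on x y U"
  shows "agree_on x y S"
  unfolding agree_on_def
proof
  fix f
  assume "f \<in> cyc_mon S"
  then obtain M where M: "f = prod_mset (image_mset cyclotomic M)" "set_mset M \<subseteq> S"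
    unfolding cyc_mon_def by blast
  then obtain U where "set_mset M \<subseteq> U" "agree_on x y U"
    using assms[of "set_mset M"] by auto
  moreover have "f \<in> cyc_mon U"
    using M(1) \<open>set_mset M \<subseteq> U\<close> unfolding cyc_mon_def by blast
  ultimately show "x f = y f"
    unfolding agree_on_def by blast
qed

lemma completion_agree_on_connected:
  fixes x y :: "int poly \<Rightarrow> 'a::ab_group_add poly set"
  assumes x: "x \<in> completion S" and y: "y \<in> completion S" and "0 \<notin> S" and "S' \<subseteq> S"
    and nontrivial: "(UNIV :: 'a set) \<noteq> {0}"
    and chains: "\<forall>n\<in>S. \<exists>ns :: nat list. ns \<noteq> [] \<and> hd ns \<in> S' \<and> last ns = n \<and> set ns \<subseteq> S \<and>
           (\<forall>i. Suc i < length ns \<longrightarrow> equiv_A TYPE('a) (ns ! i) (ns ! Suc i))"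
    and agree: "agree_on x y S'"
  shows "agree_on x y S"
proof (rule agree_on_if_finite_subsets)
  fix F
  assume "finite F" "F \<subseteq> S"
  then have "\<exists>U. S' \<subseteq> U \<and> U \<subseteq> S \<and> F \<subseteq> U \<and> agree_on x y U"
  proof (induction F rule: finite_induct)
    case empty
    then show ?case
      using \<open>S' \<subseteq> S\<close> agree by blast
  next
    case (insert n F)
    then obtain U where U: "S' \<subseteq> U" "U \<subseteq> S" "F \<subseteq> U" "agree_on x y U"
      by auto
    obtain ns where ns: "ns \<noteq> []" "hd ns \<in> S'" "last ns = n" "set ns \<subseteq> S"
      "\<forall>i. Suc i < length ns \<longrightarrow> equiv_A TYPE('a) (ns ! i) (ns ! Suc i)"
      using chains insert.prems by auto
    have "agree_on x y (U \<union> set ns)"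
      using completion_agree_on_chain[OF x y \<open>0 \<notin> S\<close> nontrivial U(4) U(2) ns(4,1) _ ns(5)]
        ns(2) U(1) by blast
    moreover have "n \<in> set ns"
      using ns(1,3) last_in_set by metis
    then have "S' \<subseteq> U \<union> set ns" "U \<union> set ns \<subseteq> S" "insert n F \<subseteq> U \<union> set ns"
      using U ns(4) by auto
    ultimately show ?case
      by blast
  qed
  then show "\<exists>U. F \<subseteq> U \<and> agree_on x y U"
    by blast
qed

lemma completion_agree_on_trivial:
  fixes x y :: "int poly \<Rightarrow> 'a::ab_group_add poly set"
  assumes "(UNIV :: 'a set) = {0}" "x \<in> completion S" "y \<in> completion S"
  shows "agree_on x y S"
proof -
  have "(r :: 'a poly) = s" for r s
    using assms(1) by (metis (full_types) UNIV_I poly_eqI singletonD)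
  then show ?thesis
    using assms(2,3) completion_coset unfolding agree_on_def by (metis (full_types))
qed

lemma completion_eq_if_agree_on:
  assumes "x \<in> completion S" "y \<in> completion S" "agree_on x y S"
  shows "x = y"
proof
  fix f
  show "x f = y f"
  proof (cases "f \<in> cyc_mon S")
    case True
    with assms(3) show ?thesis
      unfolding agree_on_def by blast
  next
    case False
    with assms(1,2) show ?thesis
      by (simp add: completion_def)
  qed
qed

lemma agree_on_if_rho_eq:
  assumes "rho S' x = rho S' y"
  shows "agree_on x y S'"
  unfolding agree_on_def
proof
  fix f
  assume "f \<in> cyc_mon S'"
  then show "x f = y f"
    using fun_cong[OF assms, of f] by (simp add: rho_def)
qed

theorem theorem7p6:
  fixes S S' :: "nat set"
  assumes "0 \<notin> S"
    and "S' \<subseteq> S"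
    and "\<forall>n\<in>S. \<exists>ns :: nat list. ns \<noteq> [] \<and> hd ns \<in> S' \<and> last ns = n \<and> set ns \<subseteq> S \<and>
           (\<forall>i. Suc i < length ns \<longrightarrow> equiv_A TYPE('a::ab_group_add) (ns ! i) (ns ! Suc i))"
  shows "inj_on (rho S') (completion S :: (int poly \<Rightarrow> 'a poly set) set)"
proof (rule inj_onI)
  fix x y :: "int poly \<Rightarrow> 'a poly set"
  assume x: "x \<in> completion S" and y: "y \<in> completion S" and eq: "rho S' x = rho S' y"
  have "agree_on x y S"
  proof (cases "(UNIV :: 'a set) = {0}")
    case True
    then show ?thesis
      using x y by (rule completion_agree_on_trivial)
  next
    case False
    show ?thesis
      using completion_agree_on_connected[OF x y assms(1,2) False assms(3)]
        agree_on_if_rho_eq[OF eq] .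
  qed
  with x y show "x = y"
    by (rule completion_eq_if_agree_on)
qed

end
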